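(* For $\beta,k,m\in\mathbb{N}$ and $\operatorname{Re}(s)>1$, $$\sum_{n=1}^\infty\frac{\Lambda^{(\beta)}_{k,m}(n)}{n^s}=(-1)^k\sigma^{(\beta)}_{1-s/\beta}(m)\frac{\zeta^{(k)}(s)}{\zeta(s)},$$ the series converging absolutely, where $\zeta^{(k)}$ is the $k$-th derivative of the Riemann zeta-function.
   Context: For $\beta,q,m\in\mathbb{N}$, $c_q^{(\beta)}(m)=\sum e^{2\pi i mh/q^\beta}$, the sum over integers $0\le h<q^\beta$ such that $h$ and $q^\beta$ have no common divisor of the form $d^\beta$ with $d>1$. For $z\in\mathbb{C}$, $\sigma_z^{(\beta)}(m)=\sum_{d\in\mathbb{N},\ d^\beta\mid m}d^{\beta z}$. The generalized von Mangoldt function is $\Lambda^{(\beta)}_{k,m}(n)=\sum_{d\delta=n}c_d^{(\beta)}(m)\log^k\delta$ (so $\Lambda^{(1)}_{1,1}=\Lambda$). *)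

theory Defs
  imports "HOL-Analysis.Analysis"
begin

text \<open>The series converges
  (absolutely) for Re s > 1, which is an open set; hence the higher derivatives
  of this function at points with Re s > 1 are those of the Riemann zeta function.\<close>
definition riemann_zeta :: "complex \<Rightarrow> complex" where
  "riemann_zeta s = (\<Sum>n. 1 / (of_nat (Suc n)) powr s)"

definition gen_ramanujan :: "nat \<Rightarrow> nat \<Rightarrow> nat \<Rightarrow> complex" where
  "gen_ramanujan \<beta> q m =
     (\<Sum>h \<in> {h. h < q ^ \<beta> \<and> \<not> (\<exists>d>1. d ^ \<beta> dvd h \<and> d ^ \<beta> dvd q ^ \<beta>)}.
        exp (2 * of_real pi * \<i> * of_nat m * of_nat h / of_nat (q ^ \<beta>)))"

definition gen_sigma :: "nat \<Rightarrow> complex \<Rightarrow> nat \<Rightarrow> complex" where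
  "gen_sigma \<beta> z m = (\<Sum>d \<in> {d. 0 < d \<and> d ^ \<beta> dvd m}. (of_nat d) powr (of_nat \<beta> * z))"

definition gen_mangoldt :: "nat \<Rightarrow> nat \<Rightarrow> nat \<Rightarrow> nat \<Rightarrow> complex" where
  "gen_mangoldt \<beta> k m n =
     (\<Sum>d \<in> {d. d dvd n}. gen_ramanujan \<beta> d m * of_real (ln (real (n div d))) ^ k)"

end

theory Submission
  imports Defs "HOL-Computational_Algebra.Primes"
begin

text \<open>Sort the residues modulo \<open>n^\<beta>\<close> by their largest \<open>\<beta>\<close>-th power divisor \<open>g^\<beta>\<close> with \<open>g\<close>
  dividing \<open>n\<close>: those with a given \<open>g\<close> are \<open>g^\<beta>\<close> times the residues summed over in \<open>c_(n/g)(m)\<close>.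
  Hence the divisor sum of \<open>c_d(m)\<close> over \<open>d | n\<close> is a complete sum of \<open>n^\<beta>\<close>-th roots of unity, equal
  to \<open>F(n) = n^\<beta>\<close> if \<open>n^\<beta>\<close> divides \<open>m\<close> and \<open>0\<close> otherwise. Moebius inversion gives \<open>c(m) = \<mu> * F\<close>,
  and since \<open>F\<close> has finite support, the Dirichlet series of \<open>c(m)\<close> converges absolutely to
  \<open>\<sigma>_(1-s/\<beta>)(m) / \<zeta>(s)\<close>. Convolving with the absolutely convergent series
  \<open>\<Sum> log^k n / n^s = (-1)^k \<zeta>^(k)(s)\<close> gives the series of \<open>\<Lambda>_(k,m) = c(m) * log^k\<close>.\<close>


section \<open>Derivatives of the zeta function\<close>

lemma ln_le_powr_div:
  fixes x e :: real
  assumes "x > 0" "e > 0"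
  shows "ln x \<le> x powr e / e"
proof -
  have "ln (x powr e) \<le> x powr e - 1" using assms by (intro ln_le_minus_one) auto
  hence "e * ln x \<le> x powr e" using assms by (simp add: ln_powr)
  thus ?thesis using assms by (simp add: field_simps)
qed

lemma summable_ln_power_powr:
  fixes \<sigma> :: real
  assumes "\<sigma> > 1"
  shows "summable (\<lambda>n. ln (real n) ^ j * real n powr (-\<sigma>))"
proof -
  text \<open>Absorb the logarithms into half of the spare exponent \<open>\<sigma> - 1\<close>.\<close>
  define e where "e = (\<sigma> - 1) / (2 * (real j + 1))"
  have e: "e > 0" using assms by (simp add: e_def)
  have "real j * e \<le> (real j + 1) * e" using e by simp
  also have "\<dots> = (\<sigma> - 1) / 2" using e_def by (simp add: field_simps)
  finally have exponent: "real j * e - \<sigma> < -1" using assms by simp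
  have bound: "norm (ln (real n) ^ j * real n powr (-\<sigma>)) \<le> real n powr (real j * e - \<sigma>) / e ^ j"
    for n
  proof (cases "n = 0")
    case False
    hence n: "real n \<ge> 1" by simp
    have "ln (real n) ^ j \<le> (real n powr e / e) ^ j"
      using ln_le_powr_div[of "real n" e] e n by (intro power_mono) auto
    also have "\<dots> = real n powr (real j * e) / e ^ j"
      using n by (simp add: power_divide powr_realpow[symmetric] powr_powr mult.commute)
    finally have "ln (real n) ^ j * real n powr (-\<sigma>) \<le> real n powr (real j * e) / e ^ j * real n powr (-\<sigma>)"
      by (intro mult_right_mono) auto
    also have "\<dots> = real n powr (real j * e - \<sigma>) / e ^ j"
      by (simp add: powr_add[symmetric])
    finally show ?thesis using n by simp
  qed simp
  have "summable (\<lambda>n. real n powr (real j * e - \<sigma>) / e ^ j)"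
    using exponent by (intro summable_divide) (simp add: summable_real_powr_iff)
  thus ?thesis by (rule summable_comparison_test'[OF _ bound])
qed

definition zeta_deriv_term :: "nat \<Rightarrow> nat \<Rightarrow> complex \<Rightarrow> complex" where
  "zeta_deriv_term j n s = (- of_real (ln (real (Suc n)))) ^ j / of_nat (Suc n) powr s"

lemma zeta_deriv_term_exp:
  "zeta_deriv_term j n =
     (\<lambda>s. (- of_real (ln (real (Suc n)))) ^ j * exp (- (s * of_real (ln (real (Suc n))))))"
proof
  fix s
  have "Ln (of_nat (Suc n)) = of_real (ln (real (Suc n)))"
    by (metis Ln_of_real of_nat_0_less_iff of_real_of_nat_eq zero_less_Suc)
  moreover have "(of_nat (Suc n) :: complex) \<noteq> 0" by (metis of_nat_eq_0_iff Zero_not_Suc)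
  ultimately show "zeta_deriv_term j n s =
          (- of_real (ln (real (Suc n)))) ^ j * exp (- (s * of_real (ln (real (Suc n)))))"
    unfolding zeta_deriv_term_def powr_def by (simp add: exp_minus field_simps)
qed

lemma has_field_derivative_zeta_deriv_term:
  "(zeta_deriv_term j n has_field_derivative zeta_deriv_term (Suc j) n s) (at s)"
  unfolding zeta_deriv_term_exp by (auto intro!: derivative_eq_intros simp: algebra_simps)

lemma norm_zeta_deriv_term:
  "norm (zeta_deriv_term j n s) = ln (real (Suc n)) ^ j * real (Suc n) powr (- Re s)"
proof -
  have "norm (of_nat (Suc n) powr s :: complex) = real (Suc n) powr Re s"
    by (subst norm_powr_real_powr) auto
  thus ?thesis
    unfolding zeta_deriv_term_def by (simp add: norm_divide norm_power powr_minus_divide)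
qed

lemma summable_ln_power_powr_Suc:
  "a > 1 \<Longrightarrow> summable (\<lambda>n. ln (real (Suc n)) ^ j * real (Suc n) powr (- a))"
  using summable_ln_power_powr[of a j] by (subst summable_Suc_iff)

lemma summable_norm_zeta_deriv_term:
  "Re s > 1 \<Longrightarrow> summable (\<lambda>n. norm (zeta_deriv_term j n s))"
  unfolding norm_zeta_deriv_term by (rule summable_ln_power_powr_Suc)

lemma has_field_derivative_zeta_deriv_series:
  assumes "Re s > 1"
  shows "((\<lambda>z. \<Sum>n. zeta_deriv_term j n z) has_field_derivative (\<Sum>n. zeta_deriv_term (Suc j) n s)) (at s)"
proof -
  define a where "a = (1 + Re s) / 2"
  have a: "a > 1" "Re s > a" using assms by (auto simp: a_def)
  define S where "S = {z. Re z > a}"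
  have S: "convex S" "open S" "s \<in> S"
    using a by (auto simp: S_def convex_halfspace_Re_gt open_halfspace_Re_gt)
  have bound: "norm (zeta_deriv_term (Suc j) n z) \<le> ln (real (Suc n)) ^ Suc j * real (Suc n) powr (- a)"
    if "z \<in> S" for n z
    using that unfolding norm_zeta_deriv_term S_def by (intro mult_left_mono powr_mono) auto
  have uniform: "uniformly_convergent_on S (\<lambda>n z. \<Sum>i<n. zeta_deriv_term (Suc j) i z)"
    by (rule Weierstrass_m_test'_ev[OF _ summable_ln_power_powr_Suc[OF a(1), of "Suc j"]])
       (intro always_eventually allI ballI bound)
  show ?thesis
    by (rule has_field_derivative_series'(2)[OF S(1) _ uniform S(3)])
       (use S assms in \<open>auto intro: has_field_derivative_at_within has_field_derivative_zeta_deriv_term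
          summable_norm_cancel summable_norm_zeta_deriv_term simp: interior_open\<close>)
qed

lemma higher_deriv_riemann_zeta:
  "Re s > 1 \<Longrightarrow> (deriv ^^ k) riemann_zeta s = (\<Sum>n. zeta_deriv_term k n s)"
proof (induction k arbitrary: s)
  case 0
  thus ?case by (simp add: riemann_zeta_def zeta_deriv_term_def)
next
  case (Suc k)
  have "((deriv ^^ k) riemann_zeta has_field_derivative (\<Sum>n. zeta_deriv_term (Suc k) n s)) (at s)"
    by (rule has_field_derivative_transform_within_open
          [OF has_field_derivative_zeta_deriv_series[OF Suc.prems] open_halfspace_Re_gt[of 1]])
       (use Suc in auto)
  thus ?case by (simp add: DERIV_imp_deriv)
qed

section \<open>Dirichlet convolution of absolutely summable series\<close>

lemma has_sum_Suc_iff: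
  fixes f :: "nat \<Rightarrow> 'a :: {comm_monoid_add, topological_space}"
  shows "((\<lambda>n. f (Suc n)) has_sum S) UNIV \<longleftrightarrow> (f has_sum S) {0<..}"
  by (rule has_sum_reindex_bij_witness[where i = "\<lambda>n. n - 1" and j = Suc]) auto

lemma has_sum_greaterThan_0_suminf:
  fixes f :: "nat \<Rightarrow> complex"
  assumes "summable (\<lambda>n. norm (f (Suc n)))"
  shows "(f has_sum (\<Sum>n. f (Suc n))) {0<..}"
  unfolding has_sum_Suc_iff[symmetric]
  by (rule norm_summable_imp_has_sum[OF assms summable_sums[OF summable_norm_cancel[OF assms]]])

lemma has_sum_greaterThan_0_imp_sums:
  fixes f :: "nat \<Rightarrow> complex"
  assumes "(f has_sum S) {0<..}"
  shows "summable (\<lambda>n. norm (f (Suc n)))" "(\<lambda>n. f (Suc n)) sums S"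
proof -
  have shifted: "((\<lambda>n. f (Suc n)) has_sum S) UNIV" using assms by (simp add: has_sum_Suc_iff)
  hence "(\<lambda>n. norm (f (Suc n))) summable_on UNIV"
    by (intro summable_on_iff_abs_summable_on_complex[THEN iffD1] has_sum_imp_summable)
  thus "summable (\<lambda>n. norm (f (Suc n)))" by (simp add: summable_on_UNIV_nonneg_real_iff)
  show "(\<lambda>n. f (Suc n)) sums S" using shifted by (rule has_sum_imp_sums)
qed

lemma has_sum_dirichlet_convolution:
  fixes a b :: "nat \<Rightarrow> complex"
  assumes a: "(a has_sum A) {0<..}" and b: "(b has_sum B) {0<..}"
  shows "((\<lambda>n. \<Sum>d | d dvd n. a d * b (n div d)) has_sum (A * B)) {0<..}"
proof -
  define P :: "nat set" where "P = {0<..}"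
  have norm_a: "(\<lambda>x. norm (a x)) summable_on P" and norm_b: "(\<lambda>x. norm (b x)) summable_on P"
    using a b unfolding P_def
    by (metis has_sum_imp_summable summable_on_iff_abs_summable_on_complex)+
  have "(\<lambda>z. norm ((\<lambda>(x,y). a x * b y) z)) summable_on P \<times> P"
  proof (rule Infinite_Sum.abs_summable_on_Sigma_iff[where f = "\<lambda>(x,y). a x * b y", THEN iffD2], intro conjI ballI)
    fix x
    show "(\<lambda>y. norm (case (x, y) of (x, y) \<Rightarrow> a x * b y)) summable_on P"
      using summable_on_cmult_right[OF norm_b, of "norm (a x)"] by (simp add: norm_mult)
  next
    have "(\<lambda>x. norm (a x) * infsum (\<lambda>y. norm (b y)) P) summable_on P"
      using summable_on_cmult_left[OF norm_a] by simp
    thus "(\<lambda>x. norm (infsum (\<lambda>y. norm (case (x, y) of (x, y) \<Rightarrow> a x * b y)) P)) summable_on P"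
      by (simp add: norm_mult infsum_cmult_right' infsum_nonneg)
  qed
  hence "(\<lambda>(x,y). a x * b y) summable_on P \<times> P"
    using summable_on_iff_abs_summable_on_complex by blast
  hence product: "((\<lambda>(x,y). a x * b y) has_sum (A * B)) (P \<times> P)"
    by (rule has_sum_SigmaI[rotated 2])
       (use has_sum_cmult_right[OF b] has_sum_cmult_left[OF a] in \<open>auto simp: P_def\<close>)
  have "((\<lambda>(n,d). a d * b (n div d)) has_sum (A * B)) (SIGMA n:P. {d. d dvd n})"
    by (rule has_sum_reindex_bij_witness[where j = "\<lambda>(n,d). (d, n div d)" and i = "\<lambda>(x,y). (x*y, x)"
          and T = "P \<times> P" and h = "\<lambda>(x,y). a x * b y", THEN iffD2, OF _ _ _ _ _ refl product])
       (auto simp: P_def elim: dvdE)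
  thus ?thesis unfolding P_def[symmetric]
    by (rule has_sum_SigmaD) (auto simp: P_def finite_divisors_nat)
qed

lemma dirichlet_convolution_divide_powr:
  fixes X Y :: "nat \<Rightarrow> complex"
  assumes "n > 0"
  shows "(\<Sum>d | d dvd n. (X d / of_nat d powr s) * (Y (n div d) / of_nat (n div d) powr s)) =
         (\<Sum>d | d dvd n. X d * Y (n div d)) / of_nat n powr s"
  unfolding sum_divide_distrib
proof (rule sum.cong[OF refl])
  fix d assume "d \<in> {d. d dvd n}"
  hence "(of_nat n :: complex) = of_nat d * of_nat (n div d)" by (simp flip: of_nat_mult)
  hence "(of_nat n :: complex) powr s = of_nat d powr s * of_nat (n div d) powr s"
    by (simp add: powr_times_real)
  thus "(X d / of_nat d powr s) * (Y (n div d) / of_nat (n div d) powr s) =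
          X d * Y (n div d) / of_nat n powr s"
    by simp
qed

section \<open>The Moebius function\<close>

text \<open>A positive integer is squarefree iff it is the product of its prime factors; \<open>\<mu>(0) = 0\<close>.\<close>
definition moebius_mu :: "nat \<Rightarrow> int" where
  "moebius_mu n = (if \<Prod>(prime_factors n) = n then (-1) ^ card (prime_factors n) else 0)"

lemma abs_moebius_mu_le: "\<bar>moebius_mu n\<bar> \<le> 1"
  by (simp add: moebius_mu_def)

lemma prime_factors_prod_primes:
  fixes S :: "nat set"
  assumes "finite S" "\<And>p. p \<in> S \<Longrightarrow> prime p"
  shows "prime_factors (\<Prod>S) = S"
proof -
  have "0 \<notin> id ` S" using assms(2) by (auto dest: prime_gt_0_nat)
  hence "prime_factors (prod id S) = \<Union>((prime_factors \<circ> id) ` S)"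
    by (rule prime_factors_prod[OF assms(1)])
  also have "\<dots> = S" using assms(2) by (auto simp: prime_prime_factors)
  finally show ?thesis by simp
qed

lemma prod_subset_prime_factors_dvd:
  fixes S :: "nat set"
  assumes "finite S" "S \<subseteq> prime_factors n"
  shows "\<Prod>S dvd n"
  using assms
proof (induction S rule: finite_induct)
  case (insert p S)
  have p: "prime p" "p dvd n" using insert.prems by (auto simp: in_prime_factors_iff)
  have "\<not> p dvd \<Prod>S"
  proof
    assume "p dvd \<Prod>S"
    then obtain q where "q \<in> S" "p dvd q"
      using p(1) insert.hyps(1) by (auto simp: prime_dvd_prod_iff)
    moreover have "prime q" using \<open>q \<in> S\<close> insert.prems by (auto simp: in_prime_factors_iff)
    ultimately have "p = q" using p(1) by (simp add: primes_dvd_imp_eq)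
    thus False using \<open>q \<in> S\<close> insert.hyps(2) by simp
  qed
  hence "coprime p (\<Prod>S)" using p(1) by (simp add: prime_imp_coprime)
  thus ?case using p(2) insert by (simp add: divides_mult)
qed simp

lemma sum_Pow_minus_one_power_card:
  fixes P :: "'a set"
  assumes "finite P"
  shows "(\<Sum>X\<in>Pow P. (-1::int) ^ card X) = (if P = {} then 1 else 0)"
proof -
  have "(\<Prod>x\<in>P. (1::int) - 1) = (\<Sum>X\<in>Pow P. (-1::int) ^ card X)"
    using prod_diff_conv_sum[OF assms, of "\<lambda>_. 1" "\<lambda>_. 1::int"] by simp
  thus ?thesis using assms by (simp add: power_0_left card_eq_0_iff)
qed

lemma bij_betw_prod_Pow_prime_factors:
  fixes n :: nat
  assumes "n > 0"
  shows "bij_betw Prod (Pow (prime_factors n)) {d. d dvd n \<and> \<Prod>(prime_factors d) = d}"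
proof (rule bij_betw_imageI)
  have primes: "finite S \<and> (\<forall>p\<in>S. prime p)" if "S \<in> Pow (prime_factors n)" for S
    using that finite_subset by (auto simp: in_prime_factors_iff)
  show "inj_on Prod (Pow (prime_factors n))"
  proof (rule inj_onI)
    fix S T :: "nat set"
    assume ST: "S \<in> Pow (prime_factors n)" "T \<in> Pow (prime_factors n)" "\<Prod>S = \<Prod>T"
    have "S = prime_factors (\<Prod>S)" using primes[OF ST(1)] prime_factors_prod_primes by simp
    also have "\<dots> = T" using primes[OF ST(2)] prime_factors_prod_primes ST(3) by simp
    finally show "S = T" .
  qed
  show "Prod ` Pow (prime_factors n) = {d. d dvd n \<and> \<Prod>(prime_factors d) = d}"
  proof (intro equalityI subsetI)
    fix d assume "d \<in> Prod ` Pow (prime_factors n)"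
    then obtain S where S: "S \<in> Pow (prime_factors n)" "d = \<Prod>S" by auto
    thus "d \<in> {d. d dvd n \<and> \<Prod>(prime_factors d) = d}"
      using primes[OF S(1)] prime_factors_prod_primes[of S] prod_subset_prime_factors_dvd[of S n]
      by simp
  next
    fix d assume d: "d \<in> {d. d dvd n \<and> \<Prod>(prime_factors d) = d}"
    hence "prime_factors d \<subseteq> prime_factors n"
      using assms by (auto simp: in_prime_factors_iff intro: dvd_trans)
    thus "d \<in> Prod ` Pow (prime_factors n)" using d by (intro image_eqI[of d _ "prime_factors d"]) auto
  qed
qed

lemma sum_moebius_mu_divisors:
  assumes "n > 0"
  shows "(\<Sum>d | d dvd n. moebius_mu d) = (if n = 1 then 1 else 0)"
proof -
  define P where "P = prime_factors n"
  have "(\<Sum>d | d dvd n. moebius_mu d) = (\<Sum>d | d dvd n \<and> \<Prod>(prime_factors d) = d. moebius_mu d)"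
    using assms by (intro sum.mono_neutral_right) (auto simp: moebius_mu_def finite_divisors_nat)
  also have "\<dots> = (\<Sum>S\<in>Pow P. moebius_mu (\<Prod>S))"
    unfolding P_def by (rule sum.reindex_bij_betw[OF bij_betw_prod_Pow_prime_factors[OF assms], symmetric])
  also have "\<dots> = (\<Sum>S\<in>Pow P. (-1) ^ card S)"
  proof (rule sum.cong[OF refl])
    fix S assume "S \<in> Pow P"
    hence "finite S" "\<And>p. p \<in> S \<Longrightarrow> prime p"
      using finite_subset by (auto simp: P_def in_prime_factors_iff)
    thus "moebius_mu (\<Prod>S) = (-1) ^ card S"
      using prime_factors_prod_primes by (simp add: moebius_mu_def)
  qed
  also have "\<dots> = (if P = {} then 1 else 0)"
    by (rule sum_Pow_minus_one_power_card) (simp add: P_def)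
  also have "(P = {}) = (n = 1)" using assms unfolding P_def
    by (metis prime_factorization_empty_iff set_mset_eq_empty_iff nat_dvd_1_iff_1 not_gr0)
  finally show ?thesis .
qed

lemma divisor_of_cofactor_iff:
  fixes n d e :: nat
  assumes "n > 0"
  shows "(d dvd n \<and> e dvd n div d) \<longleftrightarrow> (e dvd n \<and> d dvd n div e)"
proof -
  have "(x dvd n \<and> y dvd n div x) \<longleftrightarrow> x * y dvd n" for x y
    using assms by (metis div_dvd_iff_mult dvd_div_iff_mult dvd_mult_left less_nat_zero_code
        mult.commute not_gr0 dvd_0_left_iff)
  thus ?thesis by (simp add: mult.commute)
qed

lemma moebius_inversion:
  fixes a f :: "nat \<Rightarrow> complex"
  assumes f: "\<And>n. n > 0 \<Longrightarrow> (\<Sum>d | d dvd n. a d) = f n" and n: "n > 0"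
  shows "a n = (\<Sum>d | d dvd n. of_int (moebius_mu d) * f (n div d))"
proof -
  define D where "D n = {d. d dvd n}" for n :: nat
  have fin: "finite (D q)" if "q > 0" for q using that by (simp add: D_def finite_divisors_nat)
  have cofactor_pos: "n div d > 0" if "d \<in> D n" for d
    using that n by (auto simp: D_def elim!: dvdE)
  have "(\<Sum>d\<in>D n. of_int (moebius_mu d) * f (n div d)) =
        (\<Sum>d\<in>D n. \<Sum>e\<in>D (n div d). of_int (moebius_mu d) * a e)"
  proof (rule sum.cong[OF refl])
    fix d assume "d \<in> D n"
    thus "of_int (moebius_mu d) * f (n div d) = (\<Sum>e\<in>D (n div d). of_int (moebius_mu d) * a e)"
      using f[of "n div d"] cofactor_pos by (simp add: D_def sum_distrib_left[symmetric])
  qed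
  also have "\<dots> = (\<Sum>(d, e)\<in>(SIGMA d:D n. D (n div d)). of_int (moebius_mu d) * a e)"
    using fin cofactor_pos n by (subst sum.Sigma) auto
  also have "\<dots> = (\<Sum>(e, d)\<in>(SIGMA e:D n. D (n div e)). of_int (moebius_mu d) * a e)"
    by (rule sum.reindex_bij_witness[where i = prod.swap and j = prod.swap])
       (use divisor_of_cofactor_iff[OF n] in \<open>auto simp: D_def\<close>)
  also have "\<dots> = (\<Sum>e\<in>D n. \<Sum>d\<in>D (n div e). of_int (moebius_mu d) * a e)"
    using fin cofactor_pos n by (subst sum.Sigma) auto
  also have "\<dots> = (\<Sum>e\<in>D n. a e * (\<Sum>d\<in>D (n div e). of_int (moebius_mu d)))"
    by (simp add: sum_distrib_left mult.commute)
  also have "\<dots> = (\<Sum>e\<in>D n. if e = n then a e else 0)"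
  proof (rule sum.cong[OF refl])
    fix e assume e: "e \<in> D n"
    hence "(n div e = 1) = (e = n)" using n by (auto simp: D_def elim!: dvdE)
    thus "a e * (\<Sum>d\<in>D (n div e). of_int (moebius_mu d)) = (if e = n then a e else 0)"
      using sum_moebius_mu_divisors[OF cofactor_pos[OF e]]
      by (simp add: D_def flip: of_int_sum)
  qed
  also have "\<dots> = a n" using fin[OF n] by (simp add: D_def)
  finally show ?thesis by (simp add: D_def)
qed

section \<open>Generalized Ramanujan sums\<close>

lemma sum_roots_of_unity:
  assumes "N > 0"
  shows "(\<Sum>h<N. exp (2 * of_real pi * \<i> * of_nat m * of_nat h / of_nat N)) =
         (if N dvd m then of_nat N else (0::complex))"
proof -
  define \<omega> where "\<omega> = exp (2 * of_real pi * \<i> * of_nat m / of_nat N)"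
  have power: "exp (2 * of_real pi * \<i> * of_nat m * of_nat h / of_nat N) = \<omega> ^ h" for h
  proof -
    have "2 * of_real pi * \<i> * of_nat m * of_nat h / of_nat N = of_nat h * (2 * of_real pi * \<i> * of_nat m / of_nat N)"
      by simp
    thus ?thesis unfolding \<omega>_def by (simp only: exp_of_nat_mult)
  qed
  have "\<omega> ^ N = exp (of_nat m * (2 * of_real pi * \<i>))"
    unfolding \<omega>_def exp_of_nat_mult[symmetric] using assms by (simp add: mult_ac)
  hence root: "\<omega> ^ N = 1" by (simp only: exp_of_nat_mult exp_two_pi_i power_one)
  show ?thesis
  proof (cases "N dvd m")
    case True
    then obtain k where k: "m = N * k" by auto
    have "\<omega> = exp (of_nat k * (2 * of_real pi * \<i>))"
      unfolding \<omega>_def k using assms by (simp add: field_simps)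
    also have "\<dots> = 1" by (simp only: exp_of_nat_mult exp_two_pi_i power_one)
    finally show ?thesis using True by (simp add: power)
  next
    case False
    have "\<omega> \<noteq> 1"
    proof
      assume "\<omega> = 1"
      then obtain j :: int where "Im (2 * of_real pi * \<i> * of_nat m / of_nat N) = of_int (2 * j) * pi"
        unfolding \<omega>_def exp_eq_1 by blast
      hence "real m = real_of_int j * real N" using assms by (simp add: field_simps)
      hence "int m = j * int N" by (metis of_int_eq_iff of_int_mult of_int_of_nat_eq)
      thus False using False by (metis dvd_triv_right int_dvd_int_iff)
    qed
    thus ?thesis using False by (simp add: power sum_gp_strict root)
  qed
qed

lemma lcm_power_dvd:
  fixes e g h b :: nat
  assumes "e ^ b dvd h" "g ^ b dvd h"
  shows "lcm e g ^ b dvd h"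
proof (cases "b = 0 \<or> e = 0 \<or> g = 0")
  case True
  thus ?thesis using assms by (auto simp: zero_power)
next
  case False
  have "lcm e g ^ b * gcd e g ^ b = lcm (e ^ b) (g ^ b) * gcd (e ^ b) (g ^ b)"
    by (metis mult.commute power_mult_distrib prod_gcd_lcm_nat)
  hence "lcm e g ^ b = lcm (e ^ b) (g ^ b)" using False by simp
  thus ?thesis using assms by simp
qed

definition ramanujan_residues :: "nat \<Rightarrow> nat \<Rightarrow> nat set" where
  "ramanujan_residues b q = {h. h < q ^ b \<and> \<not> (\<exists>d>1. d ^ b dvd h \<and> d ^ b dvd q ^ b)}"

lemma finite_ramanujan_residues: "finite (ramanujan_residues b q)"
  by (rule finite_subset[of _ "{..<q ^ b}"]) (auto simp: ramanujan_residues_def)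

definition max_power_divisor :: "nat \<Rightarrow> nat \<Rightarrow> nat \<Rightarrow> nat" where
  "max_power_divisor b n h = Max {e. e dvd n \<and> e ^ b dvd h}"

lemma
  fixes n :: nat
  assumes "n > 0"
  shows max_power_divisor_dvd: "max_power_divisor b n h dvd n"
    and max_power_divisor_power_dvd: "max_power_divisor b n h ^ b dvd h"
    and dvd_max_power_divisor: "e dvd n \<Longrightarrow> e ^ b dvd h \<Longrightarrow> e dvd max_power_divisor b n h"
proof -
  define S where "S = {e. e dvd n \<and> e ^ b dvd h}"
  have fin: "finite S" using assms unfolding S_def by (auto intro: finite_subset[OF _ finite_divisors_nat])
  have "max_power_divisor b n h \<in> S"
    unfolding max_power_divisor_def S_def[symmetric] using fin by (intro Max_in) (auto simp: S_def)
  thus max_dvd: "max_power_divisor b n h dvd n" and "max_power_divisor b n h ^ b dvd h"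
    by (auto simp: S_def)
  text \<open>\<open>S\<close> is closed under \<open>lcm\<close>, so its maximum is a multiple of each of its elements.\<close>
  assume e: "e dvd n" "e ^ b dvd h"
  define l where "l = lcm e (max_power_divisor b n h)"
  have "l \<in> S" unfolding l_def S_def
    using e \<open>max_power_divisor b n h \<in> S\<close> by (auto simp: S_def intro: lcm_power_dvd)
  hence "l \<le> max_power_divisor b n h" unfolding max_power_divisor_def S_def[symmetric] using fin by simp
  moreover have "max_power_divisor b n h \<le> l" unfolding l_def
    using e max_dvd assms by (intro dvd_imp_le) (auto simp: lcm_pos_nat dvd_pos_nat)
  ultimately show "e dvd max_power_divisor b n h" by (metis dvd_lcm1 l_def order_antisym)
qed

lemma max_power_divisor_eqI:
  fixes n :: nat
  assumes "n > 0" "g dvd n" "g ^ b dvd h" "\<And>e. e dvd n \<Longrightarrow> e ^ b dvd h \<Longrightarrow> e dvd g"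
  shows "max_power_divisor b n h = g"
  using assms max_power_divisor_dvd[OF assms(1)] max_power_divisor_power_dvd[OF assms(1)]
    dvd_max_power_divisor[OF assms(1)] by (metis dvd_antisym)

lemma ramanujan_residues_cofactor_iff:
  fixes n g h b :: nat
  assumes b: "b \<ge> 1" and g: "g dvd n" and n: "n > 0"
  shows "\<not> (\<exists>d>1. d ^ b dvd h \<and> d ^ b dvd (n div g) ^ b) \<longleftrightarrow> max_power_divisor b n (g ^ b * h) = g"
proof
  have gpos: "g > 0" using g n by (auto intro: Nat.gr0I)
  assume no_divisor: "\<not> (\<exists>d>1. d ^ b dvd h \<and> d ^ b dvd (n div g) ^ b)"
  show "max_power_divisor b n (g ^ b * h) = g"
  proof (rule max_power_divisor_eqI[OF n g])
    fix e assume e: "e dvd n" "e ^ b dvd g ^ b * h"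
    define l where "l = lcm e g"
    have "g dvd l" unfolding l_def by simp
    then obtain d where d: "l = g * d" by auto
    have "l dvd n" unfolding l_def using e g by simp
    then obtain k where k: "n = g * d * k" using d by (auto elim: dvdE)
    have "d ^ b dvd (n div g) ^ b" using k gpos by (simp add: power_mult_distrib)
    moreover have "g ^ b * d ^ b dvd g ^ b * h"
      using lcm_power_dvd[of e b "g ^ b * h" g] e d by (simp add: l_def power_mult_distrib)
    hence "d ^ b dvd h" using gpos by simp
    ultimately have "\<not> d > 1" using no_divisor by blast
    moreover have "d \<noteq> 0" using n k by auto
    ultimately have "d = 1" by simp
    thus "e dvd g" using d dvd_lcm1[of e g] by (simp add: l_def)
  qed simp
next
  assume max: "max_power_divisor b n (g ^ b * h) = g"
  show "\<not> (\<exists>d>1. d ^ b dvd h \<and> d ^ b dvd (n div g) ^ b)"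
  proof
    assume "\<exists>d>1. d ^ b dvd h \<and> d ^ b dvd (n div g) ^ b"
    then obtain d where d: "d > 1" "d ^ b dvd h" "d ^ b dvd (n div g) ^ b" by blast
    have "d dvd n div g" using d(3) b by simp
    hence "g * d dvd n" using g by (metis dvd_mult_div_cancel mult_dvd_mono dvd_refl)
    moreover have "(g * d) ^ b dvd g ^ b * h" using d(2) by (simp add: power_mult_distrib)
    ultimately have "g * d dvd g" using dvd_max_power_divisor[OF n] max by metis
    thus False using d(1) g n by (metis dvd_imp_le dvd_pos_nat mult_le_cancel1 nat_mult_1_right not_less)
  qed
qed

lemma bij_betw_ramanujan_residues:
  fixes b n :: nat
  assumes b: "b \<ge> 1" and n: "n > 0"
  shows "bij_betw (\<lambda>(g, h). g ^ b * h)
           (SIGMA g:{g. g dvd n}. ramanujan_residues b (n div g)) {..<n ^ b}"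
proof (rule bij_betw_byWitness[where f' = "\<lambda>h. (max_power_divisor b n h, h div max_power_divisor b n h ^ b)"])
  have split_power: "n ^ b = g ^ b * (n div g) ^ b" if "g dvd n" for g
    using that by (metis dvd_mult_div_cancel power_mult_distrib)
  show "\<forall>x\<in>SIGMA g:{g. g dvd n}. ramanujan_residues b (n div g).
          (\<lambda>h. (max_power_divisor b n h, h div max_power_divisor b n h ^ b)) ((\<lambda>(g, h). g ^ b * h) x) = x"
    using ramanujan_residues_cofactor_iff[OF b _ n]
    by (auto simp: ramanujan_residues_def dvd_pos_nat[OF n])
  show "(\<lambda>(g, h). g ^ b * h) ` (SIGMA g:{g. g dvd n}. ramanujan_residues b (n div g)) \<subseteq> {..<n ^ b}"
    using split_power by (auto simp: ramanujan_residues_def dvd_pos_nat[OF n])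
  show "\<forall>h\<in>{..<n ^ b}. (\<lambda>(g, h). g ^ b * h)
          ((\<lambda>h. (max_power_divisor b n h, h div max_power_divisor b n h ^ b)) h) = h"
    using max_power_divisor_power_dvd[OF n] by simp
  show "(\<lambda>h. (max_power_divisor b n h, h div max_power_divisor b n h ^ b)) ` {..<n ^ b}
          \<subseteq> (SIGMA g:{g. g dvd n}. ramanujan_residues b (n div g))"
  proof (rule image_subsetI)
    fix h assume "h \<in> {..<n ^ b}"
    hence h: "h < n ^ b" by simp
    define g where "g = max_power_divisor b n h"
    have g: "g dvd n" "g ^ b dvd h" unfolding g_def using n
      by (auto intro: max_power_divisor_dvd max_power_divisor_power_dvd)
    hence "g ^ b * (h div g ^ b) < g ^ b * (n div g) ^ b" using h split_power by simp
    hence "h div g ^ b < (n div g) ^ b" by (simp add: mult_less_cancel1)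
    moreover have "max_power_divisor b n (g ^ b * (h div g ^ b)) = g" using g by (simp add: g_def)
    ultimately have "h div g ^ b \<in> ramanujan_residues b (n div g)"
      using ramanujan_residues_cofactor_iff[OF b g(1) n] by (simp add: ramanujan_residues_def)
    thus "(g, h div g ^ b) \<in> (SIGMA g:{g. g dvd n}. ramanujan_residues b (n div g))"
      using g(1) by simp
  qed
qed

lemma sum_gen_ramanujan_divisors:
  fixes b n m :: nat
  assumes b: "b \<ge> 1" and n: "n > 0"
  shows "(\<Sum>d | d dvd n. gen_ramanujan b d m) = (if n ^ b dvd m then of_nat (n ^ b) else 0)"
proof -
  define E where "E q h = exp (2 * of_real pi * \<i> * of_nat m * of_nat h / of_nat (q ^ b))" for q h :: nat
  have E: "E n (g ^ b * h) = E (n div g) h" if "g dvd n" for g h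
  proof -
    have "(of_nat (n ^ b) :: complex) = of_nat (g ^ b) * of_nat ((n div g) ^ b)"
      using that by (metis dvd_mult_div_cancel of_nat_mult power_mult_distrib)
    moreover have "g > 0" using that n by (simp add: dvd_pos_nat)
    ultimately show ?thesis unfolding E_def by (simp add: field_simps)
  qed
  have "(\<Sum>d | d dvd n. gen_ramanujan b d m) = (\<Sum>g | g dvd n. gen_ramanujan b (n div g) m)"
    by (rule sum.reindex_bij_witness[where i = "\<lambda>d. n div d" and j = "\<lambda>d. n div d"])
       (auto simp: n dvd_div_eq_mult dvd_pos_nat div_div_eq_right)
  also have "\<dots> = (\<Sum>g | g dvd n. \<Sum>h\<in>ramanujan_residues b (n div g). E (n div g) h)"
    by (simp add: gen_ramanujan_def ramanujan_residues_def E_def)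
  also have "\<dots> = (\<Sum>(g, h)\<in>(SIGMA g:{g. g dvd n}. ramanujan_residues b (n div g)). E (n div g) h)"
    by (rule sum.Sigma) (use n in \<open>auto simp: finite_divisors_nat finite_ramanujan_residues\<close>)
  also have "\<dots> = (\<Sum>(g, h)\<in>(SIGMA g:{g. g dvd n}. ramanujan_residues b (n div g)). E n (g ^ b * h))"
    by (rule sum.cong) (auto simp: E)
  also have "\<dots> = (\<Sum>h<n ^ b. E n h)"
    using sum.reindex_bij_betw[OF bij_betw_ramanujan_residues[OF b n], of "E n"] by (simp add: split_def)
  also have "\<dots> = (if n ^ b dvd m then of_nat (n ^ b) else 0)"
    unfolding E_def by (rule sum_roots_of_unity) (use n in simp)
  finally show ?thesis .
qed

section \<open>Dirichlet series\<close>

lemma has_sum_riemann_zeta: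
  assumes "Re s > 1"
  shows "((\<lambda>n. 1 / of_nat n powr s) has_sum riemann_zeta s) {0<..}"
  using has_sum_greaterThan_0_suminf[of "\<lambda>n. 1 / of_nat n powr s"] summable_norm_zeta_deriv_term[OF assms, of 0]
  by (simp add: riemann_zeta_def zeta_deriv_term_def)

lemma has_sum_ln_power_dirichlet:
  assumes "Re s > 1"
  shows "((\<lambda>n. of_real (ln (real n)) ^ k / of_nat n powr s) has_sum (-1) ^ k * (deriv ^^ k) riemann_zeta s) {0<..}"
proof -
  have summand: "of_real (ln (real (Suc n))) ^ k / of_nat (Suc n) powr s = (-1) ^ k * zeta_deriv_term k n s" for n
  proof -
    have "zeta_deriv_term k n s = (-1) ^ k * (of_real (ln (real (Suc n))) ^ k / of_nat (Suc n) powr s)"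
      unfolding zeta_deriv_term_def by (subst power_minus) simp
    moreover have "(-1 :: complex) ^ k * (-1) ^ k = 1" by (simp flip: power_mult_distrib)
    ultimately show ?thesis by (metis mult.assoc mult_1)
  qed
  have "(\<Sum>n. (-1) ^ k * zeta_deriv_term k n s) = (-1) ^ k * (deriv ^^ k) riemann_zeta s"
    using summable_norm_cancel[OF summable_norm_zeta_deriv_term[OF assms]]
    by (simp add: suminf_mult higher_deriv_riemann_zeta[OF assms])
  moreover have "summable (\<lambda>n. norm ((-1) ^ k * zeta_deriv_term k n s))"
    using summable_norm_zeta_deriv_term[OF assms] by (simp add: norm_mult norm_power)
  note has_sum_greaterThan_0_suminf[of "\<lambda>n. of_real (ln (real n)) ^ k / of_nat n powr s", unfolded summand, OF this]
  ultimately show ?thesis by simp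
qed

lemma has_sum_moebius_mu_dirichlet:
  assumes "Re s > 1"
  shows "riemann_zeta s \<noteq> 0"
    and "((\<lambda>n. of_int (moebius_mu n) / of_nat n powr s) has_sum inverse (riemann_zeta s)) {0<..}"
proof -
  define M where "M = (\<Sum>n. of_int (moebius_mu (Suc n)) / of_nat (Suc n) powr s :: complex)"
  have "norm (of_int (moebius_mu (Suc n)) / of_nat (Suc n) powr s :: complex) \<le> norm (zeta_deriv_term 0 n s)"
    for n
    using abs_moebius_mu_le[of "Suc n"] unfolding zeta_deriv_term_def norm_divide norm_of_int
    by (intro divide_right_mono) auto
  hence "summable (\<lambda>n. norm (of_int (moebius_mu (Suc n)) / of_nat (Suc n) powr s :: complex))"
    by (intro summable_comparison_test'[OF summable_norm_zeta_deriv_term[OF assms, of 0]]) simp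
  hence M: "((\<lambda>n. of_int (moebius_mu n) / of_nat n powr s) has_sum M) {0<..}"
    unfolding M_def by (rule has_sum_greaterThan_0_suminf)
  have convolution: "((\<lambda>n. \<Sum>d | d dvd n. of_int (moebius_mu d) / of_nat d powr s * (1 / of_nat (n div d) powr s))
          has_sum M * riemann_zeta s) {0<..}"
    by (rule has_sum_dirichlet_convolution[OF M has_sum_riemann_zeta[OF assms]])
  have delta: "(\<Sum>d | d dvd n. of_int (moebius_mu d) / of_nat d powr s * (1 / of_nat (n div d) powr s)) =
                 (if n = 1 then 1 else 0)" if "n \<in> {0<..}" for n
    using that dirichlet_convolution_divide_powr[of n "\<lambda>d. of_int (moebius_mu d)" s "\<lambda>_. 1"]
      sum_moebius_mu_divisors[of n] by (simp flip: of_int_sum)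
  have "((\<lambda>n::nat. if n = 1 then 1 else 0) has_sum M * riemann_zeta s) {0<..}"
    by (rule has_sum_cong[THEN iffD1, OF _ convolution]) (rule delta)
  moreover have "((\<lambda>n::nat. if n = 1 then 1 else 0 :: complex) has_sum 1) {0<..}"
    by (rule has_sum_finite_neutralI[of "{1}"]) auto
  ultimately have "riemann_zeta s * M = 1" by (simp add: mult.commute has_sum_unique)
  thus "riemann_zeta s \<noteq> 0" by auto
  show "((\<lambda>n. of_int (moebius_mu n) / of_nat n powr s) has_sum inverse (riemann_zeta s)) {0<..}"
    using M inverse_unique[OF \<open>riemann_zeta s * M = 1\<close>] by simp
qed

lemma has_sum_gen_sigma_dirichlet:
  fixes \<beta> m :: nat
  assumes "\<beta> \<ge> 1" "m > 0"
  shows "((\<lambda>n. (if n ^ \<beta> dvd m then of_nat (n ^ \<beta>) else 0) / of_nat n powr s)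
           has_sum gen_sigma \<beta> (1 - s / of_nat \<beta>) m) {0<..}"
proof (rule has_sum_finite_neutralI)
  have "d \<le> m" if "0 < d" "d ^ \<beta> dvd m" for d :: nat
  proof -
    have "d \<le> d ^ \<beta>" using that assms by (intro self_le_power) auto
    also have "\<dots> \<le> m" using that assms by (intro dvd_imp_le)
    finally show ?thesis .
  qed
  hence "{d. 0 < d \<and> d ^ \<beta> dvd m} \<subseteq> {..m}" by auto
  thus "finite {d. 0 < d \<and> d ^ \<beta> dvd m}" by (rule finite_subset) simp
  show "gen_sigma \<beta> (1 - s / of_nat \<beta>) m =
          (\<Sum>d | 0 < d \<and> d ^ \<beta> dvd m. (if d ^ \<beta> dvd m then of_nat (d ^ \<beta>) else 0) / of_nat d powr s)"
    unfolding gen_sigma_def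
  proof (rule sum.cong[OF refl])
    fix d assume d: "d \<in> {d. 0 < d \<and> d ^ \<beta> dvd m}"
    have "of_nat \<beta> * (1 - s / of_nat \<beta>) = of_nat \<beta> - s" using assms by (simp add: field_simps)
    hence "(of_nat d :: complex) powr (of_nat \<beta> * (1 - s / of_nat \<beta>)) = of_nat d powr of_nat \<beta> / of_nat d powr s"
      by (simp add: powr_diff)
    also have "(of_nat d :: complex) powr of_nat \<beta> = of_nat (d ^ \<beta>)" using d by (simp add: powr_nat')
    finally show "(of_nat d :: complex) powr (of_nat \<beta> * (1 - s / of_nat \<beta>)) =
            (if d ^ \<beta> dvd m then of_nat (d ^ \<beta>) else 0) / of_nat d powr s"
      using d by simp
  qed
  show "{d. 0 < d \<and> d ^ \<beta> dvd m} \<subseteq> {0<..}" by auto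
  show "(if d ^ \<beta> dvd m then of_nat (d ^ \<beta>) else 0) / of_nat d powr s = 0"
    if "d \<in> {0<..} - {d. 0 < d \<and> d ^ \<beta> dvd m}" for d
    using that by auto
qed

lemma has_sum_gen_ramanujan_dirichlet:
  fixes \<beta> m :: nat
  assumes "\<beta> \<ge> 1" "m > 0" "Re s > 1"
  shows "((\<lambda>n. gen_ramanujan \<beta> n m / of_nat n powr s)
           has_sum gen_sigma \<beta> (1 - s / of_nat \<beta>) m / riemann_zeta s) {0<..}"
proof -
  define F where "F n = (if n ^ \<beta> dvd m then of_nat (n ^ \<beta>) else 0 :: complex)" for n
  have convolution: "((\<lambda>n. \<Sum>d | d dvd n. of_int (moebius_mu d) / of_nat d powr s * (F (n div d) / of_nat (n div d) powr s))
          has_sum inverse (riemann_zeta s) * gen_sigma \<beta> (1 - s / of_nat \<beta>) m) {0<..}"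
    by (rule has_sum_dirichlet_convolution[OF has_sum_moebius_mu_dirichlet(2)[OF assms(3)]
          has_sum_gen_sigma_dirichlet[OF assms(1,2), folded F_def]])
  have inversion: "(\<Sum>d | d dvd n. of_int (moebius_mu d) / of_nat d powr s * (F (n div d) / of_nat (n div d) powr s)) =
                 gen_ramanujan \<beta> n m / of_nat n powr s" if "n \<in> {0<..}" for n
    using that dirichlet_convolution_divide_powr[of n "\<lambda>d. of_int (moebius_mu d)" s F]
      moebius_inversion[of "\<lambda>d. gen_ramanujan \<beta> d m" F n] sum_gen_ramanujan_divisors[OF assms(1)]
    by (simp add: F_def)
  have "((\<lambda>n. gen_ramanujan \<beta> n m / of_nat n powr s)
          has_sum inverse (riemann_zeta s) * gen_sigma \<beta> (1 - s / of_nat \<beta>) m) {0<..}"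
    by (rule has_sum_cong[THEN iffD1, OF _ convolution]) (rule inversion)
  thus ?thesis by (simp add: field_simps)
qed

lemma gen_mangoldt_divide_powr:
  assumes "n > 0"
  shows "gen_mangoldt \<beta> k m n / of_nat n powr s =
           (\<Sum>d | d dvd n. gen_ramanujan \<beta> d m / of_nat d powr s *
              (of_real (ln (real (n div d))) ^ k / of_nat (n div d) powr s))"
  using dirichlet_convolution_divide_powr[OF assms, of "\<lambda>d. gen_ramanujan \<beta> d m" s "\<lambda>j. of_real (ln (real j)) ^ k"]
  by (simp add: gen_mangoldt_def)

theorem mainTheorem8:
  fixes \<beta> k m :: nat and s :: complex
  assumes "\<beta> \<ge> 1" and "k \<ge> 1" and "m \<ge> 1" and "Re s > 1"
  shows "summable (\<lambda>n. norm (gen_mangoldt \<beta> k m (Suc n) / (of_nat (Suc n)) powr s))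
    \<and> (\<lambda>n. gen_mangoldt \<beta> k m (Suc n) / (of_nat (Suc n)) powr s) sums
        ((-1) ^ k * gen_sigma \<beta> (1 - s / of_nat \<beta>) m
           * (deriv ^^ k) riemann_zeta s / riemann_zeta s)"
proof -
  have m: "m > 0" using assms(3) by simp
  have convolution: "((\<lambda>n. \<Sum>d | d dvd n. gen_ramanujan \<beta> d m / of_nat d powr s *
            (of_real (ln (real (n div d))) ^ k / of_nat (n div d) powr s))
          has_sum gen_sigma \<beta> (1 - s / of_nat \<beta>) m / riemann_zeta s * ((-1) ^ k * (deriv ^^ k) riemann_zeta s))
          {0<..}"
    by (rule has_sum_dirichlet_convolution[OF has_sum_gen_ramanujan_dirichlet[OF assms(1) m assms(4)]
          has_sum_ln_power_dirichlet[OF assms(4)]])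
  have "((\<lambda>n. gen_mangoldt \<beta> k m n / of_nat n powr s)
          has_sum gen_sigma \<beta> (1 - s / of_nat \<beta>) m / riemann_zeta s * ((-1) ^ k * (deriv ^^ k) riemann_zeta s))
          {0<..}"
    by (rule has_sum_cong[THEN iffD1, OF _ convolution]) (simp add: gen_mangoldt_divide_powr)
  from has_sum_greaterThan_0_imp_sums[OF this] show ?thesis by (simp add: mult_ac)
qed

end
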